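(* Let $P=\{p_1,p_2,p_3,p_4\}$ and $Q=\{q_1,q_2,q_3,q_4\}$ be two 4-point subsets of the Riemann sphere $\widehat{\mathbb{C}}$, each in general position (its four points do not lie on a common generalized circle). Then $P$ and $Q$ are Möbius equivalent (there is a Möbius transformation mapping $P$ onto $Q$) if and only if their shapes have the same angles.
   Context: Generalized circles are circles and straight lines (the latter completed by $\infty$) in $\widehat{\mathbb{C}}$; any three distinct points lie on exactly one. For a 4-point set $P=\{p_1,\dots,p_4\}$ in general position and each $l\in\{1,2,3,4\}$, the curvilinear triangle $T_l$ has as vertices the three points $p_i$, $i\ne l$; its side joining $p_i$ and $p_j$ ($i,j\neq l$) is the arc, with endpoints $p_i,p_j$, of the generalized circle through $p_i,p_j,p_l$ that does not contain $p_l$. Each $T_l$ is regarded as an oriented curvilinear triangle, its vertices read in the positive (counterclockwise) orientation induced by the orientation of the sphere, and its angles are the angles at its three vertices taken in this cyclic order (when one point is $\infty$, the triangle on the three finite points is an ordinary Euclidean triangle, positively oriented, and the others are bounded by an arc and two rays). The four triangles $T_1,\dots,T_4$ have the same oriented angles, and the shape of $P$ is this oriented curvilinear triangle (with its cyclically ordered angles). "The shapes have the same angles" means the cyclically ordered triples of angles of the shapes of $P$ and $Q$ coincide up to cyclic permutation. *)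

theory Defs
  imports Complex_Main
begin

text \<open>The Riemann sphere: finite points are Some z, the point at infinity is None.\<close>
type_synonym csphere = "complex option"

definition moebius_map :: "complex \<Rightarrow> complex \<Rightarrow> complex \<Rightarrow> complex \<Rightarrow> csphere \<Rightarrow> csphere" where
  "moebius_map a b c d w =
     (case w of
        None \<Rightarrow> (if c = 0 then None else Some (a / c))
      | Some z \<Rightarrow> (if c * z + d = 0 then None else Some ((a * z + b) / (c * z + d))))"

definition is_moebius :: "(csphere \<Rightarrow> csphere) \<Rightarrow> bool" where
  "is_moebius f \<longleftrightarrow> (\<exists>a b c d. a * d - b * c \<noteq> 0 \<and> f = moebius_map a b c d)"

definition moebius_equivalent :: "csphere set \<Rightarrow> csphere set \<Rightarrow> bool" where
  "moebius_equivalent P Q \<longleftrightarrow> (\<exists>f. is_moebius f \<and> f ` P = Q)"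

definition gen_circle :: "csphere set \<Rightarrow> bool" where
  "gen_circle C \<longleftrightarrow>
     (\<exists>c r. r > 0 \<and> C = Some ` {z. cmod (z - c) = r}) \<or>
     (\<exists>a d. d \<noteq> 0 \<and> C = insert None (Some ` {a + complex_of_real t * d | t. True}))"

definition general_position :: "csphere set \<Rightarrow> bool" where
  "general_position P \<longleftrightarrow> card P = 4 \<and> \<not> (\<exists>C. gen_circle C \<and> P \<subseteq> C)"

text \<open>Tangent direction (up to a positive real factor) at the finite point a of the arc,
  with endpoints a and b, of the generalized circle through a, b, c that does not contain c.
  (Obtained from the Moebius map sending a, b, c to 0, 1, \<infinity>, under which that arc becomes [0,1].)\<close>
fun arc_dir_fin :: "complex \<Rightarrow> csphere \<Rightarrow> csphere \<Rightarrow> complex" where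
  "arc_dir_fin a (Some b) (Some c) = (a - c) * (b - a) / (b - c)"
| "arc_dir_fin a (Some b) None = b - a"
| "arc_dir_fin a None (Some c) = a - c"
| "arc_dir_fin a None None = 0"

text \<open>The chart w = 1/z at infinity (holomorphic, hence orientation preserving).\<close>
fun inv_chart :: "csphere \<Rightarrow> csphere" where
  "inv_chart None = Some 0"
| "inv_chart (Some z) = (if z = 0 then None else Some (1 / z))"

text \<open>Tangent direction at vertex a (in the standard chart at a: identity if a is finite,
  1/z if a = \<infinity>) of the arc from a to b of the generalized circle through a, b, c avoiding c.\<close>
fun arc_dir :: "csphere \<Rightarrow> csphere \<Rightarrow> csphere \<Rightarrow> complex" where
  "arc_dir (Some a) b c = arc_dir_fin a b c"
| "arc_dir None b c = arc_dir_fin 0 (inv_chart b) (inv_chart c)"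

text \<open>Signed angle at vertex a of the curvilinear triangle T_l (vertices a, b, c, l the omitted
  point), measured from the side a-b to the side a-c.  It lies in (0, pi) iff (a, b, c) is the
  positive (counterclockwise) orientation of T_l.\<close>
definition signed_vertex_angle :: "csphere \<Rightarrow> csphere \<Rightarrow> csphere \<Rightarrow> csphere \<Rightarrow> real" where
  "signed_vertex_angle l a b c = Arg (arc_dir a c l / arc_dir a b l)"

definition vertex_angle :: "csphere \<Rightarrow> csphere \<Rightarrow> csphere \<Rightarrow> csphere \<Rightarrow> real" where
  "vertex_angle l a b c = \<bar>signed_vertex_angle l a b c\<bar>"

text \<open>The angles of the oriented triangle T_l of P, as the set of all cyclic readings of its
  angle triple in positive orientation (so two such sets are equal iff the cyclically ordered
  triples coincide up to cyclic permutation).\<close>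
definition triangle_angles :: "csphere set \<Rightarrow> csphere \<Rightarrow> (real \<times> real \<times> real) set" where
  "triangle_angles P l =
     {(vertex_angle l a b c, vertex_angle l b c a, vertex_angle l c a b) | a b c.
        P - {l} = {a, b, c} \<and> distinct [a, b, c] \<and> 0 < signed_vertex_angle l a b c}"

text \<open>The shapes of P and Q have the same angles (the four triangles T_l of a set all have the
  same oriented angles, so we compare every T_l of P with every T_l' of Q).\<close>
definition same_shape_angles :: "csphere set \<Rightarrow> csphere set \<Rightarrow> bool" where
  "same_shape_angles P Q \<longleftrightarrow> (\<forall>l\<in>P. \<forall>l'\<in>Q. triangle_angles P l = triangle_angles Q l')"

end

theory Submission
  imports Defs "HOL-Analysis.Complex_Transcendental"
begin

text \<open>
  In homogeneous coordinates the ratio of the tangent directions of two sides of \<open>T\<^sub>l\<close> at a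
  vertex is a cross ratio: with \<open>\<lambda>\<close> the cross ratio of the four points read with \<open>l\<close> last, the
  angles of \<open>T\<^sub>l\<close> are \<open>|Arg \<lambda>|\<close>, \<open>|Arg (1 / (1 - \<lambda>))|\<close> and \<open>|Arg (1 - 1 / \<lambda>)|\<close>. Cross ratios are
  invariant under Moebius maps and under the Klein four-group of relabellings, which exchanges
  the omitted point with any other one; hence all \<open>T\<^sub>l\<close> have the same angles and Moebius
  equivalent sets have the same shape. Conversely, four points with a real cross ratio lie on a
  generalized circle, so in general position the labelling can be chosen with \<open>\<lambda>\<close> in the upper
  half plane. There \<open>\<lambda>\<close> is determined by \<open>Arg \<lambda>\<close> and \<open>Arg (1 / (1 - \<lambda>))\<close>, and two labelled
  quadruples with equal cross ratios are related by a Moebius map: both are sent to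
  \<open>0, 1, \<infinity>, z\<close> with \<open>\<lambda> = 1 - z\<close>.
\<close>

section \<open>Homogeneous coordinates and the cross ratio\<close>

fun hom_coords :: "csphere \<Rightarrow> complex \<times> complex" where
  "hom_coords None = (1, 0)"
| "hom_coords (Some z) = (z, 1)"

definition bracket :: "complex \<times> complex \<Rightarrow> complex \<times> complex \<Rightarrow> complex" where
  "bracket x y = fst x * snd y - snd x * fst y"

definition cross_ratio :: "csphere \<Rightarrow> csphere \<Rightarrow> csphere \<Rightarrow> csphere \<Rightarrow> complex" where
  "cross_ratio a b c l =
     bracket (hom_coords c) (hom_coords a) * bracket (hom_coords b) (hom_coords l) /
     (bracket (hom_coords c) (hom_coords l) * bracket (hom_coords b) (hom_coords a))"

lemma bracket_hom_coords_eq_0_iff [simp]: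
  "bracket (hom_coords p) (hom_coords q) = 0 \<longleftrightarrow> p = q"
  by (cases p; cases q) (auto simp: bracket_def)

lemma bracket_hom_coords [simp]:
  "bracket (hom_coords (Some z)) (hom_coords (Some w)) = z - w"
  "bracket (hom_coords None) (hom_coords (Some w)) = 1"
  "bracket (hom_coords (Some z)) (hom_coords None) = -1"
  by (simp_all add: bracket_def)

lemma bracket_self [simp]: "bracket x x = 0"
  by (simp add: bracket_def)

lemma bracket_swap: "bracket y x = - bracket x y"
  by (simp add: bracket_def)

lemma cross_ratio_klein_symmetry:
  "cross_ratio d c b a = cross_ratio a b c d"
  "cross_ratio b a d c = cross_ratio a b c d"
  "cross_ratio c d a b = cross_ratio a b c d"
  unfolding cross_ratio_def bracket_def by (simp_all add: algebra_simps)

lemma cross_ratio_swap: "cross_ratio a c b l = inverse (cross_ratio a b c l)"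
  unfolding cross_ratio_def inverse_divide by (simp add: mult.commute)

lemma cross_ratio_rotate:
  assumes "distinct [l, a, b, c]"
  shows "cross_ratio b c a l = 1 / (1 - cross_ratio a b c l)"
proof -
  let ?br = "\<lambda>p q. bracket (hom_coords p) (hom_coords q)"
  have plucker: "?br c l * ?br b a - ?br c a * ?br b l = ?br c b * ?br l a"
    by (simp add: bracket_def algebra_simps)
  have "?br c l \<noteq> 0" "?br b a \<noteq> 0"
    using assms by auto
  then have "1 - cross_ratio a b c l =
      (?br c l * ?br b a - ?br c a * ?br b l) / (?br c l * ?br b a)"
    unfolding cross_ratio_def by (simp add: field_simps)
  also have "\<dots> = ?br c b * ?br l a / (?br c l * ?br b a)"
    by (simp only: plucker)
  finally show ?thesis
    unfolding cross_ratio_def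
    by (simp add: bracket_swap[of "hom_coords a" "hom_coords b"]
        bracket_swap[of "hom_coords a" "hom_coords l"] mult.commute)
qed

lemma cross_ratio_0_1_infinity: "cross_ratio (Some 0) (Some 1) None (Some z) = 1 - z"
  by (simp add: cross_ratio_def bracket_def)

section \<open>Moebius maps act linearly on homogeneous coordinates\<close>

definition proj_point :: "complex \<times> complex \<Rightarrow> csphere" where
  "proj_point v = (if snd v = 0 then None else Some (fst v / snd v))"

definition scale_pair :: "complex \<Rightarrow> complex \<times> complex \<Rightarrow> complex \<times> complex" where
  "scale_pair s v = (s * fst v, s * snd v)"

definition moebius_lin ::
    "complex \<Rightarrow> complex \<Rightarrow> complex \<Rightarrow> complex \<Rightarrow> complex \<times> complex \<Rightarrow> complex \<times> complex" where
  "moebius_lin a b c d x = (a * fst x + b * snd x, c * fst x + d * snd x)"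

lemma moebius_map_eq_proj_point:
  "moebius_map a b c d p = proj_point (moebius_lin a b c d (hom_coords p))"
  by (cases p) (auto simp: moebius_map_def proj_point_def moebius_lin_def)

lemma hom_coords_nonzero: "hom_coords p \<noteq> (0, 0)"
  by (cases p) auto

lemma bracket_moebius_lin:
  "bracket (moebius_lin a b c d x) (moebius_lin a b c d y) = (a * d - b * c) * bracket x y"
  by (simp add: bracket_def moebius_lin_def algebra_simps)

lemma bracket_scale_pair: "bracket (scale_pair s x) (scale_pair t y) = s * t * bracket x y"
  by (simp add: bracket_def scale_pair_def algebra_simps)

lemma proj_point_scale_pair: "s \<noteq> 0 \<Longrightarrow> proj_point (scale_pair s v) = proj_point v"
  by (auto simp: proj_point_def scale_pair_def)

lemma moebius_lin_scale_pair:
  "moebius_lin a b c d (scale_pair s v) = scale_pair s (moebius_lin a b c d v)"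
  by (simp add: moebius_lin_def scale_pair_def algebra_simps)

lemma moebius_lin_nonzero:
  assumes "a * d - b * c \<noteq> 0" "x \<noteq> (0, 0)"
  shows "moebius_lin a b c d x \<noteq> (0, 0)"
proof
  assume zero: "moebius_lin a b c d x = (0, 0)"
  have "bracket x y = 0" for y
    using bracket_moebius_lin[of a b c d x y] zero assms(1) by (simp add: bracket_def)
  from this[of "(1, 0)"] this[of "(0, 1)"] assms(2) show False
    by (cases x) (simp add: bracket_def)
qed

lemma hom_coords_proj_point:
  assumes "v \<noteq> (0, 0)"
  shows "\<exists>s. s \<noteq> 0 \<and> hom_coords (proj_point v) = scale_pair s v"
proof (cases "snd v = 0")
  case True
  with assms have "fst v \<noteq> 0" by (cases v) auto
  with True show ?thesis
    by (intro exI[of _ "1 / fst v"]) (auto simp: proj_point_def scale_pair_def)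
next
  case False
  then show ?thesis
    by (intro exI[of _ "1 / snd v"]) (auto simp: proj_point_def scale_pair_def)
qed

lemma hom_coords_moebius_map:
  assumes "a * d - b * c \<noteq> 0"
  shows "\<exists>s. s \<noteq> 0 \<and> hom_coords (moebius_map a b c d p) = scale_pair s (moebius_lin a b c d (hom_coords p))"
  unfolding moebius_map_eq_proj_point
  by (rule hom_coords_proj_point[OF moebius_lin_nonzero[OF assms hom_coords_nonzero]])

lemma bracket_moebius:
  assumes "is_moebius f"
  shows "\<exists>k s. k \<noteq> 0 \<and> (\<forall>p. s p \<noteq> 0) \<and>
    (\<forall>p q. bracket (hom_coords (f p)) (hom_coords (f q)) =
      k * s p * s q * bracket (hom_coords p) (hom_coords q))"
proof -
  obtain a b c d where det: "a * d - b * c \<noteq> 0" and f: "f = moebius_map a b c d"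
    using assms unfolding is_moebius_def by blast
  have "\<forall>p. \<exists>s. s \<noteq> 0 \<and> hom_coords (f p) = scale_pair s (moebius_lin a b c d (hom_coords p))"
    using hom_coords_moebius_map[OF det] unfolding f by blast
  then obtain s where "\<forall>p. s p \<noteq> 0"
    and hom_f: "\<And>p. hom_coords (f p) = scale_pair (s p) (moebius_lin a b c d (hom_coords p))"
    by metis
  moreover have "bracket (hom_coords (f p)) (hom_coords (f q)) =
      (a * d - b * c) * s p * s q * bracket (hom_coords p) (hom_coords q)" for p q
    unfolding hom_f bracket_scale_pair bracket_moebius_lin by simp
  ultimately show ?thesis
    using det by blast
qed

lemma cross_ratio_moebius:
  assumes "is_moebius f"
  shows "cross_ratio (f a) (f b) (f c) (f l) = cross_ratio a b c l"
proof -
  obtain k s where "k \<noteq> 0" "\<forall>p. s p \<noteq> 0" and br: "\<And>p q. bracket (hom_coords (f p)) (hom_coords (f q)) =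
      k * s p * s q * bracket (hom_coords p) (hom_coords q)"
    using bracket_moebius[OF assms] by blast
  then have "k * k * s a * s b * s c * s l \<noteq> 0"
    by simp
  then show ?thesis
    unfolding cross_ratio_def br by (simp add: mult_ac)
qed

lemma inj_moebius:
  assumes "is_moebius f"
  shows "inj f"
proof (rule injI)
  fix p q assume "f p = f q"
  obtain k s where "k \<noteq> 0" "\<forall>p. s p \<noteq> 0" and br: "\<And>p q. bracket (hom_coords (f p)) (hom_coords (f q)) =
      k * s p * s q * bracket (hom_coords p) (hom_coords q)"
    using bracket_moebius[OF assms] by blast
  with br[of p q] \<open>f p = f q\<close> show "p = q"
    by simp
qed

lemma moebius_map_compose:
  assumes "a' * d' - b' * c' \<noteq> 0"
  shows "moebius_map a b c d (moebius_map a' b' c' d' p) =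
    moebius_map (a * a' + b * c') (a * b' + b * d') (c * a' + d * c') (c * b' + d * d') p"
proof -
  obtain s where "s \<noteq> 0"
    and s: "hom_coords (moebius_map a' b' c' d' p) = scale_pair s (moebius_lin a' b' c' d' (hom_coords p))"
    using hom_coords_moebius_map[OF assms] by blast
  then show ?thesis
    unfolding moebius_map_eq_proj_point[of a b c d] s moebius_lin_scale_pair
      proj_point_scale_pair[OF \<open>s \<noteq> 0\<close>]
    by (simp add: moebius_map_eq_proj_point moebius_lin_def algebra_simps)
qed

lemma moebius_map_scalar: "k \<noteq> 0 \<Longrightarrow> moebius_map k 0 0 k p = p"
  by (cases p) (auto simp: moebius_map_def)

lemma is_moebius_comp:
  assumes "is_moebius f" "is_moebius g"
  shows "is_moebius (g \<circ> f)"
proof -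
  obtain a b c d where det: "a * d - b * c \<noteq> 0" and f: "f = moebius_map a b c d"
    using assms(1) unfolding is_moebius_def by blast
  obtain a' b' c' d' where det': "a' * d' - b' * c' \<noteq> 0" and g: "g = moebius_map a' b' c' d'"
    using assms(2) unfolding is_moebius_def by blast
  have "g \<circ> f =
      moebius_map (a' * a + b' * c) (a' * b + b' * d) (c' * a + d' * c) (c' * b + d' * d)"
    by (simp add: fun_eq_iff f g moebius_map_compose[OF det])
  moreover have "(a' * a + b' * c) * (c' * b + d' * d) - (a' * b + b' * d) * (c' * a + d' * c)
      = (a' * d' - b' * c') * (a * d - b * c)"
    by (simp add: algebra_simps)
  moreover have "(a' * d' - b' * c') * (a * d - b * c) \<noteq> 0"
    using det det' by simp
  ultimately show ?thesis
    unfolding is_moebius_def by (metis (no_types))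
qed

lemma moebius_inverse:
  assumes "is_moebius f"
  obtains g where "is_moebius g" "\<And>p. g (f p) = p"
proof -
  obtain a b c d where det: "a * d - b * c \<noteq> 0" and f: "f = moebius_map a b c d"
    using assms unfolding is_moebius_def by blast
  have "moebius_map d (- b) (- c) a (f p) = p" for p
    using moebius_map_scalar[OF det, of p]
    by (simp add: f moebius_map_compose[OF det] algebra_simps)
  moreover have "is_moebius (moebius_map d (- b) (- c) a)"
    using det unfolding is_moebius_def
    by (intro exI[of _ d] exI[of _ "- b"] exI[of _ "- c"] exI[of _ a]) (simp add: algebra_simps)
  ultimately show ?thesis using that by blast
qed

lemma moebius_to_0_1_infinity:
  assumes "distinct [p, q, r]"
  shows "\<exists>f. is_moebius f \<and> f p = Some 0 \<and> f q = Some 1 \<and> f r = None"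
proof -
  let ?br = "\<lambda>x y. bracket (hom_coords x) (hom_coords y)"
  define a where "a = ?br q r * snd (hom_coords p)"
  define b where "b = - ?br q r * fst (hom_coords p)"
  define c where "c = ?br q p * snd (hom_coords r)"
  define d where "d = - ?br q p * fst (hom_coords r)"
  have lin: "moebius_lin a b c d (hom_coords x) = (?br q r * ?br x p, ?br q p * ?br x r)" for x
    by (simp add: a_def b_def c_def d_def moebius_lin_def bracket_def algebra_simps)
  have "a * d - b * c = ?br q r * ?br q p * ?br p r"
    by (simp add: a_def b_def c_def d_def bracket_def algebra_simps)
  with assms have "a * d - b * c \<noteq> 0"
    by auto
  then have "is_moebius (moebius_map a b c d)"
    unfolding is_moebius_def by blast
  moreover have "moebius_map a b c d p = Some 0" "moebius_map a b c d q = Some 1"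
    "moebius_map a b c d r = None"
    using assms
    by (auto simp: moebius_map_eq_proj_point lin proj_point_def
        bracket_swap[of "hom_coords p" "hom_coords q"])
  ultimately show ?thesis by blast
qed

lemma moebius_exists_of_cross_ratio_eq:
  assumes "distinct [l, a, b, c]" "distinct [l', a', b', c']"
    and "cross_ratio a b c l = cross_ratio a' b' c' l'"
  shows "\<exists>f. is_moebius f \<and> f a = a' \<and> f b = b' \<and> f c = c' \<and> f l = l'"
proof -
  obtain T where T: "is_moebius T" "T a = Some 0" "T b = Some 1" "T c = None"
    using moebius_to_0_1_infinity[of a b c] assms(1) by auto
  obtain T' where T': "is_moebius T'" "T' a' = Some 0" "T' b' = Some 1" "T' c' = None"
    using moebius_to_0_1_infinity[of a' b' c'] assms(2) by auto
  obtain S where S: "is_moebius S" "\<And>p. S (T' p) = p"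
    using moebius_inverse[OF T'(1)] by blast
  have "T l \<noteq> T c" "T' l' \<noteq> T' c'"
    using assms(1,2) inj_moebius[OF T(1)] inj_moebius[OF T'(1)] by (auto simp: inj_eq)
  then obtain z z' where z: "T l = Some z" and z': "T' l' = Some z'"
    using T(4) T'(4) by auto
  have "1 - z = 1 - z'"
    using cross_ratio_moebius[OF T(1), of a b c l] cross_ratio_moebius[OF T'(1), of a' b' c' l']
      assms(3) T T' z z' by (simp add: cross_ratio_0_1_infinity)
  then have "T l = T' l'" using z z' by simp
  then have "(S \<circ> T) a = a'" "(S \<circ> T) b = b'" "(S \<circ> T) c = c'" "(S \<circ> T) l = l'"
    using T T' S by (metis comp_apply)+
  with is_moebius_comp[OF T(1) S(1)] show ?thesis
    by blast
qed

section \<open>The angles of the shape as arguments of cross ratios\<close>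

lemma inv_chart_eq_moebius_map: "inv_chart = moebius_map 0 1 1 0"
  by (auto simp: fun_eq_iff moebius_map_def split: option.split)

lemma arc_dir_ratio_finite_vertex:
  assumes "distinct [l, Some a, b, c]"
  shows "arc_dir (Some a) c l / arc_dir (Some a) b l = cross_ratio (Some a) b c l"
  using assms
  by (cases b; cases c; cases l)
    (auto simp del: hom_coords.simps simp: cross_ratio_def divide_simps, simp_all add: algebra_simps)

lemma arc_dir_ratio_eq_cross_ratio:
  assumes "distinct [l, a, b, c]"
  shows "arc_dir a c l / arc_dir a b l = cross_ratio a b c l"
proof (cases a)
  case None
  \<comment> \<open>at \<open>\<infinity>\<close> the directions are read in the chart \<open>1/z\<close>, itself a Moebius map\<close>
  have moeb: "is_moebius inv_chart"
    unfolding inv_chart_eq_moebius_map is_moebius_def by force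
  have "arc_dir None c l / arc_dir None b l =
      arc_dir (Some 0) (inv_chart c) (inv_chart l) / arc_dir (Some 0) (inv_chart b) (inv_chart l)"
    by simp
  also have "\<dots> = cross_ratio (Some 0) (inv_chart b) (inv_chart c) (inv_chart l)"
    using assms None inj_moebius[OF moeb]
    by (intro arc_dir_ratio_finite_vertex) (auto simp: inj_eq simp flip: inv_chart.simps(1))
  also have "\<dots> = cross_ratio a b c l"
    using cross_ratio_moebius[OF moeb, of None b c l] None by simp
  finally show ?thesis using None by simp
qed (use assms arc_dir_ratio_finite_vertex in simp)

lemma signed_vertex_angle_eq_Arg_cross_ratio:
  "distinct [l, a, b, c] \<Longrightarrow> signed_vertex_angle l a b c = Arg (cross_ratio a b c l)"
  by (simp add: signed_vertex_angle_def arc_dir_ratio_eq_cross_ratio)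

definition angle_triple ::
    "csphere \<Rightarrow> csphere \<Rightarrow> csphere \<Rightarrow> csphere \<Rightarrow> real \<times> real \<times> real" where
  "angle_triple a b c l =
     (\<bar>Arg (cross_ratio a b c l)\<bar>, \<bar>Arg (cross_ratio b c a l)\<bar>, \<bar>Arg (cross_ratio c a b l)\<bar>)"

definition cross_ratio_angles :: "csphere set \<Rightarrow> csphere \<Rightarrow> (real \<times> real \<times> real) set" where
  "cross_ratio_angles P l =
     {angle_triple a b c l | a b c.
        P - {l} = {a, b, c} \<and> distinct [a, b, c] \<and> 0 < Arg (cross_ratio a b c l)}"

lemma cross_ratio_anglesI:
  assumes "P - {l} = {a, b, c}" "distinct [a, b, c]" "0 < Arg (cross_ratio a b c l)"
  shows "angle_triple a b c l \<in> cross_ratio_angles P l"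
  using assms unfolding cross_ratio_angles_def by blast

lemma cross_ratio_anglesE:
  assumes "t \<in> cross_ratio_angles P l"
  obtains a b c where "t = angle_triple a b c l" "P - {l} = {a, b, c}" "distinct [a, b, c]"
    "0 < Arg (cross_ratio a b c l)"
  using assms unfolding cross_ratio_angles_def by blast

lemma triangle_angles_eq_cross_ratio_angles: "triangle_angles P l = cross_ratio_angles P l"
proof -
  have "(vertex_angle l a b c, vertex_angle l b c a, vertex_angle l c a b) = angle_triple a b c l \<and>
      signed_vertex_angle l a b c = Arg (cross_ratio a b c l)"
    if "P - {l} = {a, b, c}" "distinct [a, b, c]" for a b c
  proof -
    from that have "distinct [l, a, b, c]" "distinct [l, b, c, a]" "distinct [l, c, a, b]"
      by auto
    then show ?thesis
      by (simp add: vertex_angle_def angle_triple_def signed_vertex_angle_eq_Arg_cross_ratio)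
  qed
  then show ?thesis
    unfolding triangle_angles_def cross_ratio_angles_def by (intro Collect_cong) metis
qed

lemma angle_triple_klein_symmetry:
  "angle_triple l c b a = angle_triple a b c l"
  "angle_triple c l a b = angle_triple a b c l"
  "angle_triple b a l c = angle_triple a b c l"
  unfolding angle_triple_def
  using cross_ratio_klein_symmetry[of a b c l] cross_ratio_klein_symmetry[of b c a l]
    cross_ratio_klein_symmetry[of c a b l]
  by simp_all

lemma cross_ratio_angles_subset:
  assumes "l \<in> P" "m \<in> P"
  shows "cross_ratio_angles P l \<subseteq> cross_ratio_angles P m"
proof
  fix t assume "t \<in> cross_ratio_angles P l"
  then obtain a b c where t: "t = angle_triple a b c l" and P: "P - {l} = {a, b, c}"
    and abc: "distinct [a, b, c]" and pos: "0 < Arg (cross_ratio a b c l)"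
    by (rule cross_ratio_anglesE)
  with assms(1) have l: "l \<notin> {a, b, c}" and P_eq: "P = {l, a, b, c}"
    by auto
  obtain x y z where reading: "P - {m} = {x, y, z}" "distinct [x, y, z]"
    and same: "angle_triple x y z m = angle_triple a b c l"
      "cross_ratio x y z m = cross_ratio a b c l"
  proof -
    from assms(2) P_eq consider "m = l" | "m = a" | "m = b" | "m = c"
      by blast
    then show thesis
    proof cases
      case 1
      with P abc show ?thesis by (intro that) auto
    next
      case 2
      with P_eq l abc show ?thesis
        by (intro that[of l c b])
          (auto simp: angle_triple_klein_symmetry cross_ratio_klein_symmetry)
    next
      case 3
      with P_eq l abc show ?thesis
        by (intro that[of c l a])
          (auto simp: angle_triple_klein_symmetry cross_ratio_klein_symmetry)
    next
      case 4
      with P_eq l abc show ?thesis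
        by (intro that[of b a l])
          (auto simp: angle_triple_klein_symmetry cross_ratio_klein_symmetry)
    qed
  qed
  from same t pos show "t \<in> cross_ratio_angles P m"
    using cross_ratio_anglesI[OF reading] by simp
qed

lemma cross_ratio_angles_vertex_independent:
  "l \<in> P \<Longrightarrow> m \<in> P \<Longrightarrow> cross_ratio_angles P l = cross_ratio_angles P m"
  by (simp add: cross_ratio_angles_subset subset_antisym)

lemma cross_ratio_angles_image_subset:
  assumes "is_moebius f"
  shows "cross_ratio_angles P l \<subseteq> cross_ratio_angles (f ` P) (f l)"
proof
  fix t assume "t \<in> cross_ratio_angles P l"
  then obtain a b c where t: "t = angle_triple a b c l" and P: "P - {l} = {a, b, c}"
    and abc: "distinct [a, b, c]" and pos: "0 < Arg (cross_ratio a b c l)"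
    by (rule cross_ratio_anglesE)
  have inj: "inj f" using inj_moebius[OF assms] .
  then have "f ` P - {f l} = f ` (P - {l})"
    by (simp add: image_set_diff)
  then have "f ` P - {f l} = {f a, f b, f c}"
    using P by simp
  moreover have "distinct [f a, f b, f c]"
    using abc inj by (auto simp: inj_eq)
  moreover have "0 < Arg (cross_ratio (f a) (f b) (f c) (f l))"
    using pos by (simp add: cross_ratio_moebius[OF assms])
  ultimately have "angle_triple (f a) (f b) (f c) (f l) \<in> cross_ratio_angles (f ` P) (f l)"
    by (rule cross_ratio_anglesI)
  then show "t \<in> cross_ratio_angles (f ` P) (f l)"
    using t by (simp add: angle_triple_def cross_ratio_moebius[OF assms])
qed

lemma cross_ratio_angles_image:
  assumes "is_moebius f"
  shows "cross_ratio_angles (f ` P) (f l) = cross_ratio_angles P l"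
proof
  obtain g where g: "is_moebius g" "\<And>p. g (f p) = p"
    using moebius_inverse[OF assms] by blast
  have "cross_ratio_angles (f ` P) (f l) \<subseteq> cross_ratio_angles (g ` f ` P) (g (f l))"
    by (rule cross_ratio_angles_image_subset[OF g(1)])
  also have "\<dots> = cross_ratio_angles P l"
    by (simp add: image_image g(2))
  finally show "cross_ratio_angles (f ` P) (f l) \<subseteq> cross_ratio_angles P l" .
qed (rule cross_ratio_angles_image_subset[OF assms])

lemma moebius_equivalent_imp_same_shape_angles:
  assumes "moebius_equivalent P Q"
  shows "same_shape_angles P Q"
  unfolding same_shape_angles_def triangle_angles_eq_cross_ratio_angles
proof (intro ballI)
  fix l l' assume "l \<in> P" "l' \<in> Q"
  obtain f where f: "is_moebius f" "f ` P = Q"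
    using assms unfolding moebius_equivalent_def by blast
  have "cross_ratio_angles P l = cross_ratio_angles Q (f l)"
    using cross_ratio_angles_image[OF f(1)] f(2) by blast
  also have "\<dots> = cross_ratio_angles Q l'"
    using \<open>l \<in> P\<close> \<open>l' \<in> Q\<close> f(2)
    by (intro cross_ratio_angles_vertex_independent) auto
  finally show "cross_ratio_angles P l = cross_ratio_angles Q l'" .
qed

section \<open>Four points with a real cross ratio lie on a generalized circle\<close>

lemma cmod_diff_eq_cmod_iff:
  "cmod (x - q) = cmod q \<longleftrightarrow> 2 * (Re x * Re q + Im x * Im q) = (cmod x)\<^sup>2"
proof -
  have "cmod (x - q) = cmod q \<longleftrightarrow> (cmod (x - q))\<^sup>2 = (cmod q)\<^sup>2"
    by (simp add: power2_eq_iff_nonneg)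
  also have "\<dots> \<longleftrightarrow> 2 * (Re x * Re q + Im x * Im q) = (cmod x)\<^sup>2"
    by (auto simp: cmod_power2 power2_diff algebra_simps)
  finally show ?thesis .
qed

lemma real_multiple_of_Im_divide_eq_0:
  assumes "u \<noteq> 0" "Im (v / u) = 0"
  shows "\<exists>t. v = of_real t * u"
proof
  from assms(2) have "v / u = of_real (Re (v / u))"
    by (simp add: complex_eq_iff)
  with assms(1) show "v = of_real (Re (v / u)) * u"
    by (simp add: field_simps)
qed

lemma Im_mult_cnj_eq_0:
  assumes "Im (x / y) = 0"
  shows "Im (x * cnj y) = 0"
proof (cases "y = 0")
  case False
  then have "0 < (Re y)\<^sup>2 + (Im y)\<^sup>2"
    by (simp add: complex_neq_0)
  with assms show ?thesis
    by (auto simp: Im_divide algebra_simps)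
qed simp

text \<open>The determinant with rows \<open>(|z|\<^sup>2, Re z, Im z)\<close> for \<open>z = u, v, w\<close>; it vanishes iff
  \<open>0, u, v, w\<close> lie on one circle or line.\<close>
definition circle_det :: "complex \<Rightarrow> complex \<Rightarrow> complex \<Rightarrow> real" where
  "circle_det u v w =
     (cmod u)\<^sup>2 * Im (cnj w * v) + (cmod v)\<^sup>2 * Im (cnj u * w) + (cmod w)\<^sup>2 * Im (cnj v * u)"

lemma concyclic_with_origin:
  fixes u v w :: complex
  assumes nondeg: "Im (cnj u * v) \<noteq> 0" and det: "circle_det u v w = 0"
  obtains q where "q \<noteq> 0" "cmod (u - q) = cmod q" "cmod (v - q) = cmod q"
    "cmod (w - q) = cmod q"
proof -
  define \<delta> where "\<delta> = Im (cnj u * v)"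
  have "\<delta> \<noteq> 0" using nondeg by (simp add: \<delta>_def)
  define q1 q2 where "q1 = (cmod u)\<^sup>2 * Im v - (cmod v)\<^sup>2 * Im u"
    and "q2 = (cmod v)\<^sup>2 * Re u - (cmod u)\<^sup>2 * Re v"
  \<comment> \<open>the circumcentre of \<open>0\<close>, \<open>u\<close> and \<open>v\<close>\<close>
  define q where "q = Complex (q1 / (2 * \<delta>)) (q2 / (2 * \<delta>))"
  have on_circle: "cmod (x - q) = cmod q" if "Re x * q1 + Im x * q2 = (cmod x)\<^sup>2 * \<delta>" for x
  proof -
    have "2 * (Re x * Re q + Im x * Im q) = (Re x * q1 + Im x * q2) / \<delta>"
      using \<open>\<delta> \<noteq> 0\<close> by (simp add: q_def field_simps)
    also have "\<dots> = (cmod x)\<^sup>2"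
      using that \<open>\<delta> \<noteq> 0\<close> by simp
    finally show ?thesis
      by (simp add: cmod_diff_eq_cmod_iff)
  qed
  show ?thesis
  proof (rule that)
    show "cmod (u - q) = cmod q" "cmod (v - q) = cmod q"
      by (rule on_circle; simp add: q1_def q2_def \<delta>_def cmod_power2 algebra_simps power2_eq_square)+
    show "cmod (w - q) = cmod q"
      using det by (intro on_circle) (simp add: q1_def q2_def circle_det_def \<delta>_def algebra_simps)
    show "q \<noteq> 0"
    proof
      assume "q = 0"
      with \<open>cmod (u - q) = cmod q\<close> have "u = 0" by simp
      with nondeg show False by simp
    qed
  qed
qed

lemma circle_is_gen_circle: "0 < r \<Longrightarrow> gen_circle (Some ` {z. cmod (z - c) = r})"
  unfolding gen_circle_def by blast

definition line_through :: "complex \<Rightarrow> complex \<Rightarrow> csphere set" where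
  "line_through a d = insert None (Some ` {a + complex_of_real t * d | t. True})"

lemma line_through_is_gen_circle: "d \<noteq> 0 \<Longrightarrow> gen_circle (line_through a d)"
  unfolding gen_circle_def line_through_def by blast

lemma None_mem_line_through: "None \<in> line_through a d"
  by (simp add: line_through_def)

lemma Some_mem_line_through: "Some (a + complex_of_real t * d) \<in> line_through a d"
  unfolding line_through_def by blast

lemma collinear_with_origin:
  fixes u v w :: complex
  assumes "distinct [0, u, v, w]" and deg: "Im (cnj u * v) = 0" and det: "circle_det u v w = 0"
  obtains k s where "v = of_real k * u" "w = of_real s * u"
proof -
  have Im_divide_eq_0: "Im (x / u) = 0" if "Im (cnj u * x) = 0" for x
    using that by (simp add: Im_divide algebra_simps)
  have "u \<noteq> 0"
    using assms(1) by simp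
  then obtain k where v: "v = of_real k * u"
    using real_multiple_of_Im_divide_eq_0 Im_divide_eq_0[OF deg] by blast
  with assms(1) have "k \<noteq> 0" "k \<noteq> 1"
    by auto
  have "0 = (cmod u)\<^sup>2 * k * Im (cnj w * u) + k\<^sup>2 * (cmod u)\<^sup>2 * Im (cnj u * w)"
    using det deg unfolding v circle_det_def
    by (simp add: norm_mult power_mult_distrib algebra_simps)
  also have "\<dots> = (cmod u)\<^sup>2 * k * (k - 1) * Im (cnj u * w)"
    by (simp add: power2_eq_square algebra_simps)
  finally have "Im (cnj u * w) = 0"
    using \<open>k \<noteq> 0\<close> \<open>k \<noteq> 1\<close> \<open>u \<noteq> 0\<close> by simp
  then obtain s where "w = of_real s * u"
    using real_multiple_of_Im_divide_eq_0 Im_divide_eq_0 \<open>u \<noteq> 0\<close> by blast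
  with v show ?thesis by (rule that)
qed

lemma concyclic_of_real_cross_ratio_finite:
  fixes a b c l :: complex
  assumes "distinct [l, a, b, c]" and real: "Im ((c - a) * (b - l) / ((c - l) * (b - a))) = 0"
  shows "\<exists>C. gen_circle C \<and> {Some l, Some a, Some b, Some c} \<subseteq> C"
proof -
  define u v w where "u = b - a" "v = c - a" "w = l - a"
  let ?N = "(c - a) * (b - l)" and ?D = "(c - l) * (b - a)"
  have "Im (?N * cnj ?D) = 0"
    using real by (rule Im_mult_cnj_eq_0)
  moreover have "Im (?N * cnj ?D) = - circle_det u v w"
    unfolding u_v_w_def circle_det_def cmod_power2 by (simp add: power2_eq_square algebra_simps)
  ultimately have det: "circle_det u v w = 0"
    by simp
  have dist: "distinct [0, u, v, w]"
    using assms(1) unfolding u_v_w_def by auto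
  show ?thesis
  proof (cases "Im (cnj u * v) = 0")
    case False
    then obtain q where "q \<noteq> 0" "cmod (u - q) = cmod q" "cmod (v - q) = cmod q"
      "cmod (w - q) = cmod q"
      using det by (rule concyclic_with_origin)
    then have "{Some l, Some a, Some b, Some c} \<subseteq> Some ` {z. cmod (z - (a + q)) = cmod q}"
      unfolding u_v_w_def by (auto simp: algebra_simps)
    moreover have "gen_circle (Some ` {z. cmod (z - (a + q)) = cmod q})"
      using \<open>q \<noteq> 0\<close> by (simp add: circle_is_gen_circle)
    ultimately show ?thesis by blast
  next
    case True
    obtain k s where "v = of_real k * u" "w = of_real s * u"
      using dist True det by (rule collinear_with_origin)
    then have "a = a + of_real 0 * u" "b = a + of_real 1 * u" "c = a + of_real k * u"
      "l = a + of_real s * u"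
      unfolding u_v_w_def by (simp_all add: algebra_simps)
    then have "{Some l, Some a, Some b, Some c} \<subseteq> line_through a u"
      by (metis Some_mem_line_through empty_subsetI insert_subset)
    moreover have "u \<noteq> 0"
      using dist by simp
    ultimately show ?thesis
      using line_through_is_gen_circle by blast
  qed
qed

lemma concyclic_of_real_cross_ratio_infinity:
  assumes "distinct [None, a, b, c]" and real: "Im (cross_ratio a b c None) = 0"
  shows "\<exists>C. gen_circle C \<and> {None, a, b, c} \<subseteq> C"
proof -
  obtain a' b' c' where abc: "a = Some a'" "b = Some b'" "c = Some c'"
    using assms(1) by (cases a; cases b; cases c) auto
  with assms(1) have "b' - a' \<noteq> 0"
    by auto
  have "cross_ratio a b c None = (a' - c') / (a' - b')"
    by (simp add: abc cross_ratio_def bracket_def)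
  with real \<open>b' - a' \<noteq> 0\<close> obtain t where t: "a' - c' = of_real t * (a' - b')"
    using real_multiple_of_Im_divide_eq_0[of "a' - b'" "a' - c'"] by auto
  have "c' = a' - (a' - c')"
    by simp
  also have "\<dots> = a' + of_real t * (b' - a')"
    unfolding t by (simp add: algebra_simps)
  finally have "c' = a' + of_real t * (b' - a')" .
  then have "{None, a, b, c} \<subseteq> line_through a' (b' - a')"
    using None_mem_line_through Some_mem_line_through[of a' 0 "b' - a'"]
      Some_mem_line_through[of a' 1 "b' - a'"] Some_mem_line_through[of a' t "b' - a'"]
    unfolding abc by simp
  with \<open>b' - a' \<noteq> 0\<close> show ?thesis
    using line_through_is_gen_circle by blast
qed

lemma concyclic_of_real_cross_ratio:
  assumes "distinct [l, a, b, c]" and real: "Im (cross_ratio a b c l) = 0"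
  shows "\<exists>C. gen_circle C \<and> {l, a, b, c} \<subseteq> C"
proof -
  consider l' a' b' c' where "l = Some l'" "a = Some a'" "b = Some b'" "c = Some c'"
    | "l = None" | "a = None" | "b = None" | "c = None"
    by (cases l; cases a; cases b; cases c) auto
  then show ?thesis
  proof cases
    case (1 l' a' b' c')
    moreover from this have "cross_ratio a b c l = (c' - a') * (b' - l') / ((c' - l') * (b' - a'))"
      by (simp add: cross_ratio_def bracket_def)
    ultimately show ?thesis
      using concyclic_of_real_cross_ratio_finite[of l' a' b' c'] assms by simp
  next
    case 2
    with assms show ?thesis
      by (metis concyclic_of_real_cross_ratio_infinity)
  next
    case 3
    with assms obtain C where "gen_circle C" "{None, l, c, b} \<subseteq> C"
      using concyclic_of_real_cross_ratio_infinity[of l c b]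
        cross_ratio_klein_symmetry(1)[of a b c l]
      by auto
    with 3 show ?thesis by auto
  next
    case 4
    with assms obtain C where "gen_circle C" "{None, c, l, a} \<subseteq> C"
      using concyclic_of_real_cross_ratio_infinity[of c l a]
        cross_ratio_klein_symmetry(3)[of a b c l]
      by auto
    with 4 show ?thesis by auto
  next
    case 5
    with assms obtain C where "gen_circle C" "{None, b, a, l} \<subseteq> C"
      using concyclic_of_real_cross_ratio_infinity[of b a l]
        cross_ratio_klein_symmetry(2)[of a b c l]
      by auto
    with 5 show ?thesis by auto
  qed
qed

lemma Im_cross_ratio_neq_0:
  assumes "general_position {l, a, b, c}" "distinct [l, a, b, c]"
  shows "Im (cross_ratio a b c l) \<noteq> 0"
  using assms(1) concyclic_of_real_cross_ratio[OF assms(2)] unfolding general_position_def by blast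

section \<open>Equal angles force equal cross ratios\<close>

lemma Arg_pos_iff_Im_pos: "Im z \<noteq> 0 \<Longrightarrow> 0 < Arg z \<longleftrightarrow> 0 < Im z"
  by (auto simp: Arg_pos_iff)

lemma Im_one_div_one_minus_pos: "0 < Im z \<Longrightarrow> 0 < Im (1 / (1 - z))"
  by (simp add: Im_divide sum_power2_gt_zero_iff)

lemma eq_of_Arg_eq_upper_half_plane:
  assumes "0 < Im z" "0 < Im w" "Arg z = Arg w" "Arg (1 / (1 - z)) = Arg (1 / (1 - w))"
  shows "z = w"
proof -
  \<comment> \<open>\<open>z\<close> lies on the rays from \<open>0\<close> and from \<open>1\<close> through \<open>w\<close>, which meet only at \<open>w\<close>\<close>
  have nonzero: "z \<noteq> 0" "w \<noteq> 0" "1 - z \<noteq> 0" "1 - w \<noteq> 0"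
    using assms(1,2) by auto
  obtain p where "0 < p" and p: "z = of_real p * w"
    using assms(3) nonzero by (auto simp: Arg_eq_iff)
  obtain q where "0 < q" and "1 / (1 - z) = of_real q * (1 / (1 - w))"
    using assms(4) nonzero by (auto simp: Arg_eq_iff)
  then have "1 - w = of_real q - of_real (q * p) * w"
    using nonzero by (simp add: p field_simps)
  then have "1 - Re w = q - q * p * Re w" "Im w = q * p * Im w"
    by (simp_all add: complex_eq_iff)
  with assms(2) have "q * p = 1" "q = 1"
    by simp_all
  with p show ?thesis
    by simp
qed

lemma cross_ratio_eq_of_angle_triple_eq:
  assumes "distinct [l, a, b, c]" "distinct [l', a', b', c']"
    and pos: "0 < Im (cross_ratio a b c l)" "0 < Im (cross_ratio a' b' c' l')"
    and "angle_triple a b c l = angle_triple a' b' c' l'"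
  shows "cross_ratio a b c l = cross_ratio a' b' c' l'"
proof (rule eq_of_Arg_eq_upper_half_plane[OF pos])
  have "\<bar>Arg (cross_ratio a b c l)\<bar> = \<bar>Arg (cross_ratio a' b' c' l')\<bar>"
    "\<bar>Arg (1 / (1 - cross_ratio a b c l))\<bar> =
      \<bar>Arg (1 / (1 - cross_ratio a' b' c' l'))\<bar>"
    using assms(5) cross_ratio_rotate[OF assms(1)] cross_ratio_rotate[OF assms(2)]
    by (simp_all add: angle_triple_def)
  moreover have "0 < Arg (cross_ratio a b c l)" "0 < Arg (cross_ratio a' b' c' l')"
    "0 < Arg (1 / (1 - cross_ratio a b c l))" "0 < Arg (1 / (1 - cross_ratio a' b' c' l'))"
    using pos Im_one_div_one_minus_pos by (simp_all add: Arg_pos_iff)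
  ultimately show "Arg (cross_ratio a b c l) = Arg (cross_ratio a' b' c' l')"
    "Arg (1 / (1 - cross_ratio a b c l)) = Arg (1 / (1 - cross_ratio a' b' c' l'))"
    by simp_all
qed

lemma obtain_Im_cross_ratio_pos_labelling:
  assumes "general_position P" "l \<in> P"
  obtains a b c where "P - {l} = {a, b, c}" "distinct [a, b, c]" "0 < Im (cross_ratio a b c l)"
proof -
  have "card (P - {l}) = 3"
    using assms unfolding general_position_def by simp
  then obtain a b c where abc: "P - {l} = {a, b, c}" "distinct [a, b, c]"
    by (auto simp: card_3_iff)
  then have "l \<notin> {a, b, c}"
    by blast
  with abc have "distinct [l, a, b, c]"
    by simp
  moreover from abc assms(2) have "P = {l, a, b, c}"
    by blast
  ultimately have nonreal: "Im (cross_ratio a b c l) \<noteq> 0"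
    using assms(1) Im_cross_ratio_neq_0 by blast
  show thesis
  proof (cases "0 < Im (cross_ratio a b c l)")
    case True
    with abc show ?thesis by (rule that)
  next
    case False
    with nonreal have "0 < Im (cross_ratio a c b l)"
      by (simp add: cross_ratio_swap[of a c b l] Im_inverse divide_neg_pos sum_power2_gt_zero_iff)
    moreover from abc have "P - {l} = {a, c, b}" "distinct [a, c, b]"
      by auto
    ultimately show ?thesis
      using that by blast
  qed
qed

lemma same_shape_angles_imp_cross_ratio_eq:
  assumes "general_position P" "general_position Q" and same: "same_shape_angles P Q"
  obtains l a b c l' a' b' c' where
    "P = {l, a, b, c}" "distinct [l, a, b, c]" "Q = {l', a', b', c'}" "distinct [l', a', b', c']"
    "cross_ratio a b c l = cross_ratio a' b' c' l'"
proof -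
  have "P \<noteq> {}" "Q \<noteq> {}"
    using assms(1,2) unfolding general_position_def by auto
  then obtain l l' where "l \<in> P" "l' \<in> Q"
    by blast
  obtain a b c where P: "P - {l} = {a, b, c}" "distinct [a, b, c]"
    and pos: "0 < Im (cross_ratio a b c l)"
    using obtain_Im_cross_ratio_pos_labelling[OF assms(1) \<open>l \<in> P\<close>] by blast
  have "angle_triple a b c l \<in> cross_ratio_angles P l"
    using pos by (intro cross_ratio_anglesI[OF P]) (simp add: Arg_pos_iff)
  also have "cross_ratio_angles P l = cross_ratio_angles Q l'"
    using same \<open>l \<in> P\<close> \<open>l' \<in> Q\<close>
    unfolding same_shape_angles_def triangle_angles_eq_cross_ratio_angles by blast
  finally obtain a' b' c' where same_angles: "angle_triple a b c l = angle_triple a' b' c' l'"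
    and Q: "Q - {l'} = {a', b', c'}" "distinct [a', b', c']"
    and Arg_pos: "0 < Arg (cross_ratio a' b' c' l')"
    by (rule cross_ratio_anglesE)
  have P_eq: "P = {l, a, b, c}" "distinct [l, a, b, c]"
    and Q_eq: "Q = {l', a', b', c'}" "distinct [l', a', b', c']"
    using P Q \<open>l \<in> P\<close> \<open>l' \<in> Q\<close> by auto
  with assms(2) have "Im (cross_ratio a' b' c' l') \<noteq> 0"
    by (simp add: Im_cross_ratio_neq_0)
  with Arg_pos have "0 < Im (cross_ratio a' b' c' l')"
    by (simp add: Arg_pos_iff_Im_pos)
  then have "cross_ratio a b c l = cross_ratio a' b' c' l'"
    by (intro cross_ratio_eq_of_angle_triple_eq[OF P_eq(2) Q_eq(2) pos _ same_angles])
  with P_eq Q_eq show thesis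
    by (rule that)
qed

lemma same_shape_angles_imp_moebius_equivalent:
  assumes "general_position P" "general_position Q" "same_shape_angles P Q"
  shows "moebius_equivalent P Q"
proof -
  obtain l a b c l' a' b' c' where P: "P = {l, a, b, c}" "distinct [l, a, b, c]"
    and Q: "Q = {l', a', b', c'}" "distinct [l', a', b', c']"
    and "cross_ratio a b c l = cross_ratio a' b' c' l'"
    using same_shape_angles_imp_cross_ratio_eq[OF assms] .
  then obtain f where "is_moebius f" "f a = a'" "f b = b'" "f c = c'" "f l = l'"
    using moebius_exists_of_cross_ratio_eq[OF P(2) Q(2)] by blast
  moreover from this have "f ` P = Q"
    unfolding P(1) Q(1) by simp
  ultimately show ?thesis
    unfolding moebius_equivalent_def by blast
qed

theorem theorem1p6:
  fixes P Q :: "complex option set"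
  assumes "card P = 4" and "card Q = 4"
    and "general_position P" and "general_position Q"
  shows "moebius_equivalent P Q \<longleftrightarrow> same_shape_angles P Q"
  \<comment> \<open>the cardinality hypotheses are already part of \<open>general_position\<close>\<close>
  using assms(3,4) moebius_equivalent_imp_same_shape_angles same_shape_angles_imp_moebius_equivalent
  by blast

end
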